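(* For $t\in(0,1)$ and $n\ge1$ the recurrence coefficients satisfy $$(2n+2+\alpha+\beta)\alpha_n=2tr_n-2y_n-\beta+(2n+1+\alpha+\beta)t+(1-t)x_n=2\mathsf p_1(n,t)-\beta+(2n+1+\alpha+\beta)t+(1-t)x_n,$$ and $$\begin{aligned}(2n-1+\alpha+\beta)(2n+1+\alpha+\beta)\beta_n&=(y_n-tr_n)^2+(2n+\alpha)tr_n+[\beta-(2n+\alpha+\beta)t]y_n+n(n+\alpha)t\\&=\mathsf p_1(n,t)^2+(2n+\alpha)\mathsf p_1(n,t)+(2n+\alpha+\beta)(1-t)y_n+n(n+\alpha)t\\&=\mathsf p_1(n,t)^2+[-\beta+(2n+\alpha+\beta)t]\mathsf p_1(n,t)+(2n+\alpha+\beta)t(1-t)\mathsf p_1'(n,t)+n(n+\alpha)t.\end{aligned}$$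
   Context: Fix $\alpha>0$, $\beta>0$, and real $A,B$ with $A\ge0$, $A+B\ge0$, not both zero; $\theta$ is the Heaviside step function. For $t\in(0,1)$ let $w(x;t)=x^\alpha(1-x)^\beta(A+B\theta(x-t))$ on $[0,1]$, and let $P_n(x)=P_n(x;t)=x^n+\mathsf p_1(n,t)x^{n-1}+\cdots$ be the monic orthogonal polynomials: $\int_0^1P_iP_jw\,dx=h_i(t)\delta_{ij}$, $h_i>0$, satisfying $xP_n=P_{n+1}+\alpha_nP_n+\beta_nP_{n-1}$, $P_{-1}=0$, $\beta_n=h_n/h_{n-1}$, $\mathsf p_1(0,t)=0$. Define $R_n(t)=B\,t^\alpha(1-t)^\beta P_n(t;t)^2/h_n$, $r_n(t)=B\,t^\alpha(1-t)^\beta P_n(t;t)P_{n-1}(t;t)/h_{n-1}$ ($r_0=0$), $x_n(t)=\frac{\beta}{h_n}\int_0^1\frac{P_n(y)^2}{1-y}\,y^\alpha(1-y)^\beta(A+B\theta(y-t))\,dy$, $y_n(t)=\frac{\beta}{h_{n-1}}\int_0^1\frac{P_n(y)P_{n-1}(y)}{1-y}\,y^\alpha(1-y)^\beta(A+B\theta(y-t))\,dy$ ($y_0=0$). A prime denotes $d/dt$. *)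

theory Defs
  imports "HOL-Analysis.Analysis" "HOL-Computational_Algebra.Polynomial"
begin

text \<open>Heaviside step function (the value at 0 is immaterial for all quantities below
except pointwise evaluations at y = t, where it does not enter).\<close>
definition heaviside :: "real \<Rightarrow> real" where
  "heaviside x = (if 0 \<le> x then 1 else 0)"

definition jw :: "real \<Rightarrow> real \<Rightarrow> real \<Rightarrow> real \<Rightarrow> real \<Rightarrow> real \<Rightarrow> real" where
  "jw al be A B t x = x powr al * (1 - x) powr be * (A + B * heaviside (x - t))"

definition wint :: "real \<Rightarrow> real \<Rightarrow> real \<Rightarrow> real \<Rightarrow> real \<Rightarrow> (real \<Rightarrow> real) \<Rightarrow> real" where
  "wint al be A B t f = (LINT x:{0..1}|lborel. f x * jw al be A B t x)"

definition monic_OPS ::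
  "real \<Rightarrow> real \<Rightarrow> real \<Rightarrow> real \<Rightarrow> real \<Rightarrow> (nat \<Rightarrow> real poly) \<Rightarrow> bool" where
  "monic_OPS al be A B s Q \<longleftrightarrow>
     (\<forall>k. degree (Q k) = k \<and> lead_coeff (Q k) = 1) \<and>
     (\<forall>i j. i \<noteq> j \<longrightarrow> wint al be A B s (\<lambda>x. poly (Q i) x * poly (Q j) x) = 0)"

definition h_n :: "real \<Rightarrow> real \<Rightarrow> real \<Rightarrow> real \<Rightarrow> real \<Rightarrow> (real \<Rightarrow> nat \<Rightarrow> real poly) \<Rightarrow> nat \<Rightarrow> real" where
  "h_n al be A B t P k = wint al be A B t (\<lambda>x. (poly (P t k) x)\<^sup>2)"

definition p1 :: "(real \<Rightarrow> nat \<Rightarrow> real poly) \<Rightarrow> nat \<Rightarrow> real \<Rightarrow> real" where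
  "p1 P k t = coeff (P t k) (k - 1)"

definition r_n :: "real \<Rightarrow> real \<Rightarrow> real \<Rightarrow> real \<Rightarrow> real \<Rightarrow> (real \<Rightarrow> nat \<Rightarrow> real poly) \<Rightarrow> nat \<Rightarrow> real" where
  "r_n al be A B t P k = (if k = 0 then 0 else
     B * t powr al * (1 - t) powr be * poly (P t k) t * poly (P t (k - 1)) t
       / h_n al be A B t P (k - 1))"

definition x_n :: "real \<Rightarrow> real \<Rightarrow> real \<Rightarrow> real \<Rightarrow> real \<Rightarrow> (real \<Rightarrow> nat \<Rightarrow> real poly) \<Rightarrow> nat \<Rightarrow> real" where
  "x_n al be A B t P k = be / h_n al be A B t P k *
     wint al be A B t (\<lambda>y. (poly (P t k) y)\<^sup>2 / (1 - y))"

definition y_n :: "real \<Rightarrow> real \<Rightarrow> real \<Rightarrow> real \<Rightarrow> real \<Rightarrow> (real \<Rightarrow> nat \<Rightarrow> real poly) \<Rightarrow> nat \<Rightarrow> real" where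
  "y_n al be A B t P k = (if k = 0 then 0 else be / h_n al be A B t P (k - 1) *
     wint al be A B t (\<lambda>y. poly (P t k) y * poly (P t (k - 1)) y / (1 - y)))"

end

theory Submission
  imports Defs
begin

(* Everything rests on one integration-by-parts identity (weighted_ibp): for every
   polynomial f, integrating the derivative of x^(al+1) (1-x)^be f(x) against the step
   A + B theta(x - t) gives
     (al+1+be) <f> - be <f/(1-x)> + <x f'> = - B t^(al+1) (1-t)^be f(t),
   where <.> is integration against the weight w.  Applied to f = P_n^2, P_n P_(n-1),
   x P_n^2 and x P_n P_(n-1), and evaluated by orthogonality, it yields four identities
   between x_n, y_n, R_n, r_n and the sub-leading coefficients p_1(n), p_2(n).  These give
   the alpha_n identity directly; the beta_n identity follows by induction on n, using the
   three-term recurrence to relate the quantities at n and n+1.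

   For the derivative, every weighted integral is written through the Jacobi moments
   mu_j(t) = int_t^1 x^j x^al (1-x)^be dx; the P_n(.;t) are then shown to depend
   continuously on t, and differentiating the orthogonality of P_(n-1) and P_n gives
   d/dt p_1(n,t) = r_n(t). *)

section \<open>Weighted integrals of polynomials\<close>

text \<open>The reduced weight \<open>w(x)/(1-x)\<close>; it is the weight of the integrals defining \<open>x_n\<close> and \<open>y_n\<close>.\<close>
definition jw_red :: "real \<Rightarrow> real \<Rightarrow> real \<Rightarrow> real \<Rightarrow> real \<Rightarrow> real \<Rightarrow> real" where
  "jw_red al be A B s x = x powr al * (1 - x) powr (be - 1) * (A + B * heaviside (x - s))"

lemma heaviside_measurable [measurable]: "heaviside \<in> borel_measurable borel"
proof -
  have "heaviside = (\<lambda>x. indicator {0..} x :: real)"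
    by (auto simp: heaviside_def indicator_def)
  also have "\<dots> \<in> borel_measurable borel" by measurable
  finally show ?thesis .
qed

lemma poly_measurable [measurable]: "poly (p :: real poly) \<in> borel_measurable borel"
  by (intro borel_measurable_continuous_onI continuous_intros)

lemma poly_bounded_unit_interval:
  obtains M where "\<And>x::real. x \<in> {0..1} \<Longrightarrow> \<bar>poly p x\<bar> \<le> M"
proof -
  have "compact (poly p ` {0..1::real})"
    by (intro compact_continuous_image continuous_intros) auto
  then obtain M where "\<forall>y\<in>poly p ` {0..1}. norm y \<le> M"
    using compact_imp_bounded bounded_iff by metis
  then show ?thesis using that[of M] by auto
qed

text \<open>The reduced weight is dominated by a multiple of the Beta density \<open>x^al (1-x)^(be-1)\<close>.\<close>
lemma jw_red_integrable:
  assumes "al > -1" "be > 0"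
  shows "set_integrable lborel {0..1} (jw_red al be A B s)"
proof (rule set_integrable_bound)
  show "set_integrable lborel {0..1}
          (\<lambda>x. (\<bar>A\<bar> + \<bar>B\<bar>) * (x powr (al + 1 - 1) * (1 - x) powr (be - 1)))"
    using integrable_Beta[of "al + 1" be] assms by auto
  show "set_borel_measurable lborel {0..1} (jw_red al be A B s)"
    unfolding set_borel_measurable_def jw_red_def by measurable
  show "AE x in lborel. x \<in> {0..1} \<longrightarrow> norm (jw_red al be A B s x)
          \<le> norm ((\<bar>A\<bar> + \<bar>B\<bar>) * (x powr (al + 1 - 1) * (1 - x) powr (be - 1)))"
  proof (intro AE_I2 impI)
    fix x :: real assume x: "x \<in> {0..1}"
    have "\<bar>A + B * heaviside (x - s)\<bar> \<le> \<bar>A\<bar> + \<bar>B\<bar>"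
      by (auto simp: heaviside_def)
    then have "(x powr al * (1 - x) powr (be - 1)) * \<bar>A + B * heaviside (x - s)\<bar>
             \<le> (x powr al * (1 - x) powr (be - 1)) * (\<bar>A\<bar> + \<bar>B\<bar>)"
      by (intro mult_left_mono) auto
    then show "norm (jw_red al be A B s x)
          \<le> norm ((\<bar>A\<bar> + \<bar>B\<bar>) * (x powr (al + 1 - 1) * (1 - x) powr (be - 1)))"
      using x by (simp add: jw_red_def abs_mult mult.commute)
  qed
qed

lemma poly_jw_red_integrable:
  assumes "al > -1" "be > 0"
  shows "set_integrable lborel {0..1} (\<lambda>x. poly p x * jw_red al be A B s x)"
proof -
  obtain M where M: "\<And>x::real. x \<in> {0..1} \<Longrightarrow> \<bar>poly p x\<bar> \<le> M"
    using poly_bounded_unit_interval[of p] by blast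
  show ?thesis
  proof (rule set_integrable_bound)
    show "set_integrable lborel {0..1} (\<lambda>x. M * jw_red al be A B s x)"
      using jw_red_integrable[OF assms] by auto
    show "set_borel_measurable lborel {0..1} (\<lambda>x. poly p x * jw_red al be A B s x)"
      unfolding set_borel_measurable_def jw_red_def by measurable
    show "AE x in lborel. x \<in> {0..1} \<longrightarrow>
            norm (poly p x * jw_red al be A B s x) \<le> norm (M * jw_red al be A B s x)"
      using M by (intro AE_I2 impI) (force simp: abs_mult intro: mult_right_mono)
  qed
qed

lemma jw_eq_jw_red: "x \<in> {0..1} \<Longrightarrow> jw al be A B s x = (1 - x) * jw_red al be A B s x"
proof (cases "x = 1")
  case False
  assume "x \<in> {0..1}"
  with False have "(1 - x) powr be = (1 - x) * (1 - x) powr (be - 1)"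
    using powr_add[of "1 - x" 1 "be - 1"] by simp
  then show ?thesis by (simp add: jw_def jw_red_def)
qed (simp add: jw_def jw_red_def)

lemma poly_jw_integrable:
  assumes "al > -1" "be > 0"
  shows "set_integrable lborel {0..1} (\<lambda>x. poly p x * jw al be A B s x)"
proof -
  have "set_integrable lborel {0..1} (\<lambda>x. poly (p * [:1, -1:]) x * jw_red al be A B s x)"
    by (rule poly_jw_red_integrable[OF assms])
  then show ?thesis
    by (subst (asm) set_integrable_cong[of lborel lborel "{0..1}" "{0..1}" _
          "\<lambda>x. poly p x * jw al be A B s x"]) (auto simp: jw_eq_jw_red algebra_simps)
qed

definition wpoly :: "real \<Rightarrow> real \<Rightarrow> real \<Rightarrow> real \<Rightarrow> real \<Rightarrow> real poly \<Rightarrow> real" where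
  "wpoly al be A B s p = wint al be A B s (poly p)"

definition wpoly_red :: "real \<Rightarrow> real \<Rightarrow> real \<Rightarrow> real \<Rightarrow> real \<Rightarrow> real poly \<Rightarrow> real" where
  "wpoly_red al be A B s p = (LINT x:{0..1}|lborel. poly p x * jw_red al be A B s x)"

lemma wpoly_eq_wpoly_red: "wpoly al be A B s p = wpoly_red al be A B s (p * [:1, -1:])"
  unfolding wpoly_def wpoly_red_def wint_def
  by (intro set_lebesgue_integral_cong) (auto simp: jw_eq_jw_red algebra_simps)

lemma wpoly_red_add:
  "al > -1 \<Longrightarrow> be > 0 \<Longrightarrow>
     wpoly_red al be A B s (p + q) = wpoly_red al be A B s p + wpoly_red al be A B s q"
  unfolding wpoly_red_def by (simp add: distrib_right set_integral_add poly_jw_red_integrable)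

lemma wpoly_red_smult: "wpoly_red al be A B s (smult c p) = c * wpoly_red al be A B s p"
  unfolding wpoly_red_def by (simp add: mult.assoc set_integral_mult_right)

lemma wpoly_red_diff:
  "al > -1 \<Longrightarrow> be > 0 \<Longrightarrow>
     wpoly_red al be A B s (p - q) = wpoly_red al be A B s p - wpoly_red al be A B s q"
  using wpoly_red_add[of al be A B s p "- q"] wpoly_red_smult[of al be A B s "-1" q] by simp

lemma wpoly_add:
  "al > -1 \<Longrightarrow> be > 0 \<Longrightarrow> wpoly al be A B s (p + q) = wpoly al be A B s p + wpoly al be A B s q"
  unfolding wpoly_eq_wpoly_red distrib_right by (rule wpoly_red_add)

lemma wpoly_smult: "wpoly al be A B s (smult c p) = c * wpoly al be A B s p"
  unfolding wpoly_eq_wpoly_red mult_smult_left by (rule wpoly_red_smult)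

lemma wpoly_diff:
  "al > -1 \<Longrightarrow> be > 0 \<Longrightarrow> wpoly al be A B s (p - q) = wpoly al be A B s p - wpoly al be A B s q"
  unfolding wpoly_eq_wpoly_red left_diff_distrib by (rule wpoly_red_diff)

text \<open>Multiplying by \<open>x = 1 - (1 - x)\<close> inside the reduced integral.\<close>
lemma wpoly_red_times_x:
  assumes "al > -1" "be > 0"
  shows "wpoly_red al be A B s (pCons 0 f) = wpoly_red al be A B s f - wpoly al be A B s f"
proof -
  have "pCons 0 f = f - f * [:1, -1:]" by (simp add: algebra_simps)
  then show ?thesis using assms by (simp only: wpoly_red_diff wpoly_eq_wpoly_red)
qed

text \<open>Integrating the derivative of
  \<open>x^(al+1) (1-x)^be f(x)\<close> against the step \<open>A + B \<theta>(x - s)\<close> over \<open>[0,1]\<close> leaves only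
  the jump at \<open>x = s\<close>.\<close>
lemma weighted_ibp:
  assumes al: "al > -1" and be: "be > 0" and s: "s \<in> {0<..<1}"
  shows "(al + 1 + be) * wpoly al be A B s f - be * wpoly_red al be A B s f
           + wpoly al be A B s (pCons 0 (pderiv f))
         = - B * (s powr (al + 1) * (1 - s) powr be * poly f s)"
proof -
  define g where "g x = x powr (al + 1) * (1 - x) powr be * poly f x" for x
  define g' where "g' x = (al + 1) * x powr al * (1 - x) powr be * poly f x
      - be * x powr (al + 1) * (1 - x) powr (be - 1) * poly f x
      + x powr (al + 1) * (1 - x) powr be * poly (pderiv f) x" for x
  have deriv_g: "(g has_vector_derivative g' x) (at x)" if "x \<in> {0<..<1}" for x
  proof -
    have "(g has_real_derivative g' x) (at x)"
      unfolding g_def g'_def using that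
      by (rule_tac derivative_eq_intros refl | simp add: algebra_simps)+
    then show ?thesis by (simp add: has_real_derivative_iff_has_vector_derivative)
  qed
  have cont_g: "continuous_on {0..1} g"
    unfolding g_def using al be by (intro continuous_intros continuous_on_powr') auto
  have int_left: "(g' has_integral g s) {0..s}" and int_right: "(g' has_integral - g s) {s..1}"
    using s fundamental_theorem_of_calculus_interior[OF _ continuous_on_subset[OF cont_g] deriv_g,
        of 0 s] fundamental_theorem_of_calculus_interior[OF _ continuous_on_subset[OF cont_g] deriv_g,
        of s 1]
    by (auto simp: g_def)
  define G where "G x = g' x * (A + B * heaviside (x - s))" for x
  have "(G has_integral A * g s) {0..s}"
  proof (rule has_integral_spike_finite[of "{s}"])
    show "((\<lambda>x. g' x * A) has_integral A * g s) {0..s}"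
      using has_integral_mult_left[OF int_left, of A] by (simp add: mult.commute)
  qed (auto simp: G_def heaviside_def)
  moreover have "(G has_integral (A + B) * (- g s)) {s..1}"
  proof (rule has_integral_spike_finite[of "{}"])
    show "((\<lambda>x. g' x * (A + B)) has_integral (A + B) * (- g s)) {s..1}"
      using has_integral_mult_left[OF int_right, of "A + B"] by (simp add: mult.commute)
  qed (auto simp: G_def heaviside_def)
  ultimately have step: "(G has_integral - B * g s) {0..1}"
    using has_integral_combine[of 0 s 1] s by (fastforce simp: algebra_simps)
  define F where "F = smult (al + 1 + be) (f * [:1, -1:]) - smult be f
                      + pCons 0 (pderiv f) * [:1, -1:]"
  have "G x = poly F x * jw_red al be A B s x"
    if "x \<in> {0..1} - {0, 1}" for x
  proof -
    have x: "x > 0" "1 - x > 0" using that by auto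
    have e1: "x powr (al + 1) = x * x powr al"
      using powr_add[of x al 1] x by simp
    have e2: "(1 - x) powr be = (1 - x) * (1 - x) powr (be - 1)"
      using powr_add[of "1 - x" 1 "be - 1"] x by simp
    show ?thesis unfolding G_def g'_def F_def jw_red_def e1 e2 by (simp add: algebra_simps)
  qed
  then have "((\<lambda>x. poly F x * jw_red al be A B s x) has_integral - B * g s) {0..1}"
    by (intro has_integral_spike_finite[OF _ _ step, of "{0, 1}"]) auto
  then have "wpoly_red al be A B s F = - B * g s"
    unfolding wpoly_red_def
    by (simp add: set_borel_integral_eq_integral(2)[OF poly_jw_red_integrable[OF al be]]
        integral_unique)
  moreover have "wpoly_red al be A B s F = (al + 1 + be) * wpoly al be A B s f
      - be * wpoly_red al be A B s f + wpoly al be A B s (pCons 0 (pderiv f))"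
    unfolding F_def using al be
    by (simp add: wpoly_red_add wpoly_red_diff wpoly_red_smult wpoly_eq_wpoly_red)
  ultimately show ?thesis by (simp add: g_def)
qed

section \<open>Positivity of the weight\<close>

lemma jw_pos_on_interval:
  assumes A: "A \<ge> 0" and AB: "A + B \<ge> 0" and nz: "\<not> (A = 0 \<and> B = 0)"
    and s: "s \<in> {0<..<1}"
  obtains a b where "a < b" "{a<..<b} \<subseteq> {0<..<1}"
    "\<And>x. x \<in> {a<..<b} \<Longrightarrow> jw al be A B s x > 0"
proof (cases "A > 0")
  case True
  show ?thesis
  proof (rule that[of 0 s])
    fix x assume "x \<in> {0<..<s}"
    then show "jw al be A B s x > 0" using s True by (auto simp: jw_def heaviside_def)
  qed (use s in auto)
next
  case False
  then have "A + B > 0" using A AB nz by auto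
  show ?thesis
  proof (rule that[of s 1])
    fix x assume "x \<in> {s<..<1}"
    then show "jw al be A B s x > 0" using s \<open>A + B > 0\<close> by (auto simp: jw_def heaviside_def)
  qed (use s in auto)
qed

text \<open>Hence the weighted \<open>L\<^sup>2\<close>-norm of a nonzero polynomial is positive: the integrand
  \<open>p\<^sup>2 w\<close> is nonnegative and vanishes almost everywhere only if \<open>p\<close> has infinitely many roots.\<close>
lemma wpoly_square_pos:
  assumes al: "al > -1" and be: "be > 0" and A: "A \<ge> 0" and AB: "A + B \<ge> 0"
    and nz: "\<not> (A = 0 \<and> B = 0)" and s: "s \<in> {0<..<1}" and p: "p \<noteq> 0"
  shows "wpoly al be A B s (p * p) > 0"
proof -
  define f where "f x = indicator {0..1} x * (poly (p * p) x * jw al be A B s x)" for x :: real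
  have f_nonneg: "f x \<ge> 0" for x
    using A AB by (auto simp: f_def indicator_def jw_def heaviside_def)
  have int: "integrable lborel f"
    using poly_jw_integrable[OF al be, of "p * p" A B s] unfolding set_integrable_def f_def by simp
  have W_eq: "wpoly al be A B s (p * p) = integral\<^sup>L lborel f"
    unfolding wpoly_def wint_def set_lebesgue_integral_def f_def by simp
  obtain a b where ab: "a < b" and sub: "{a<..<b} \<subseteq> {0<..<1}"
    and pos: "\<And>x. x \<in> {a<..<b} \<Longrightarrow> jw al be A B s x > 0"
    using jw_pos_on_interval[OF A AB nz s] by blast
  show ?thesis
  proof (rule ccontr)
    assume "\<not> ?thesis"
    moreover have "integral\<^sup>L lborel f \<ge> 0" using f_nonneg by (simp add: integral_nonneg)
    ultimately have "integral\<^sup>L lborel f = 0" using W_eq by simp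
    then have "AE x in lborel. f x = 0"
      using integral_nonneg_eq_0_iff_AE[OF int] f_nonneg by simp
    moreover have "AE x in lborel. x \<notin> {x. poly p x = 0}"
      using poly_roots_finite[OF p]
      by (intro AE_I'[of "{x. poly p x = 0}"])
         (auto simp: emeasure_lborel_countable countable_finite null_sets_def)
    ultimately have "AE x in lborel. x \<notin> {a<..<b}"
    proof eventually_elim
      case (elim x)
      show ?case
      proof
        assume x: "x \<in> {a<..<b}"
        then have "poly p x * poly p x * jw al be A B s x = 0"
          using sub elim(1) by (auto simp: f_def)
        then show False using pos[OF x] elim(2) by simp
      qed
    qed
    then have "{a<..<b} \<in> null_sets lborel"
      by (auto simp: AE_iff_null_sets set_diff_eq Collect_neg_eq[symmetric])
    then show False using ab by (simp add: null_sets_def emeasure_lborel_Ioo)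
  qed
qed

lemma degree_diff_same_top:
  fixes p q :: "real poly"
  assumes "degree p \<le> Suc d" "degree q \<le> Suc d" "coeff p (Suc d) = coeff q (Suc d)"
  shows "degree (p - q) \<le> d"
proof (rule degree_le, intro allI impI)
  fix i assume "d < i"
  then show "coeff (p - q) i = 0" using assms by (cases "i = Suc d") (auto simp: coeff_eq_0)
qed

lemma constant_poly_eq: "degree (q :: real poly) = 0 \<Longrightarrow> q = smult (coeff q 0) 1"
  by (metis degree_0_id mult.right_neutral one_pCons smult_pCons smult_0_right)

lemma coeff_x_pderiv: "coeff (pCons 0 (pderiv p)) j = of_nat j * coeff (p :: real poly) j"
  by (cases j) (auto simp: coeff_pderiv)

lemma degree_x_pderiv: "degree (pCons 0 (pderiv p)) \<le> degree (p :: real poly)"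
  by (rule degree_le) (auto simp: coeff_x_pderiv coeff_eq_0)

lemma euler_shift:
  fixes p :: "real poly"
  assumes p: "degree p \<le> k" and k: "k \<ge> 1"
  shows "degree (pCons 0 (pderiv p) - smult (of_nat k) p) \<le> k - 1"
    and "coeff (pCons 0 (pderiv p) - smult (of_nat k) p) (k - 1) = - coeff p (k - 1)"
proof -
  have cf: "coeff (pCons 0 (pderiv p) - smult (of_nat k) p) j = (of_nat j - of_nat k) * coeff p j"
    for j by (simp add: coeff_x_pderiv algebra_simps)
  show "degree (pCons 0 (pderiv p) - smult (of_nat k) p) \<le> k - 1"
  proof (rule degree_le, intro allI impI)
    fix i assume "k - 1 < i"
    then have "i = k \<or> degree p < i" using p k by auto
    then show "coeff (pCons 0 (pderiv p) - smult (of_nat k) p) i = 0"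
      unfolding cf by (auto simp: coeff_eq_0)
  qed
  show "coeff (pCons 0 (pderiv p) - smult (of_nat k) p) (k - 1) = - coeff p (k - 1)"
    unfolding cf using k by (simp add: of_nat_diff algebra_simps)
qed

lemma coeff_x_euler_shift:
  "coeff (pCons 0 (pCons 0 (pderiv p)) - smult (of_nat k) (pCons 0 p)) j
     = (if j = 0 then 0 else (of_nat j - 1 - of_nat k) * coeff (p :: real poly) (j - 1))"
  by (cases j) (auto simp: coeff_x_pderiv algebra_simps)

lemma degree_x_euler_shift:
  "degree (p :: real poly) \<le> k
     \<Longrightarrow> degree (pCons 0 (pCons 0 (pderiv p)) - smult (of_nat k) (pCons 0 p)) \<le> k"
proof (rule degree_le, intro allI impI)
  fix i assume "degree p \<le> k" "k < i"
  then have "i = Suc k \<or> degree p < i - 1" by auto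
  then show "coeff (pCons 0 (pCons 0 (pderiv p)) - smult (of_nat k) (pCons 0 p)) i = 0"
    unfolding coeff_x_euler_shift by (auto simp: coeff_eq_0)
qed

section \<open>A family of monic orthogonal polynomials\<close>

locale jacobi_jump_family =
  fixes al be A B :: real and P :: "real \<Rightarrow> nat \<Rightarrow> real poly"
  assumes al: "al > 0" and be: "be > 0" and A: "A \<ge> 0" and AB: "A + B \<ge> 0"
    and nz: "\<not> (A = 0 \<and> B = 0)"
    and OPS: "\<And>s. s \<in> {0<..<1} \<Longrightarrow> monic_OPS al be A B s (P s)"
begin

abbreviation "W \<equiv> wpoly al be A B"
abbreviation "V \<equiv> wpoly_red al be A B"

lemma W_add: "W s (p + q) = W s p + W s q"
  using wpoly_add al be by simp

lemma W_diff: "W s (p - q) = W s p - W s q"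
  using wpoly_diff al be by simp

lemma V_add: "V s (p + q) = V s p + V s q"
  using wpoly_red_add al be by simp

lemma V_times_x: "V s (pCons 0 f) = V s f - W s f"
  using wpoly_red_times_x al be by simp

definition hnorm :: "real \<Rightarrow> nat \<Rightarrow> real" where
  "hnorm s k = W s (P s k * P s k)"

definition arec :: "real \<Rightarrow> nat \<Rightarrow> real" where
  "arec s k = W s (P s k * pCons 0 (P s k)) / hnorm s k"

definition brec :: "real \<Rightarrow> nat \<Rightarrow> real" where
  "brec s k = (if k = 0 then 0 else hnorm s k / hnorm s (k - 1))"

lemma deg_P: "s \<in> {0<..<1} \<Longrightarrow> degree (P s k) = k"
  using OPS unfolding monic_OPS_def by blast

lemma lead_P: "s \<in> {0<..<1} \<Longrightarrow> coeff (P s k) k = 1"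
  using OPS deg_P unfolding monic_OPS_def by metis

lemma coeff_P_above: "s \<in> {0<..<1} \<Longrightarrow> j > k \<Longrightarrow> coeff (P s k) j = 0"
  using deg_P coeff_eq_0 by metis

lemma orth_P: "s \<in> {0<..<1} \<Longrightarrow> i \<noteq> j \<Longrightarrow> W s (P s i * P s j) = 0"
  using OPS unfolding monic_OPS_def wpoly_def by (simp add: poly_mult[abs_def])

lemma P_zero: "s \<in> {0<..<1} \<Longrightarrow> P s 0 = 1"
  using constant_poly_eq[of "P s 0"] deg_P[of s 0] lead_P[of s 0] by simp

lemma hnorm_pos: "s \<in> {0<..<1} \<Longrightarrow> hnorm s k > 0"
proof -
  assume s: "s \<in> {0<..<1}"
  then have "P s k \<noteq> 0" using lead_P[OF s, of k] by auto
  then show ?thesis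
    unfolding hnorm_def using wpoly_square_pos[OF _ be A AB nz s] al by simp
qed

lemma hnorm_nz: "s \<in> {0<..<1} \<Longrightarrow> hnorm s k \<noteq> 0"
  using hnorm_pos[of s k] by simp

lemma orth_lower_degree:
  assumes s: "s \<in> {0<..<1}"
  shows "degree q < k \<Longrightarrow> W s (P s k * q) = 0"
proof (induction "degree q" arbitrary: q rule: less_induct)
  case less
  show ?case
  proof (cases "degree q")
    case 0
    then have "P s k * q = smult (coeff q 0) (P s k * P s 0)"
      using P_zero[OF s] constant_poly_eq[of q] by (metis mult_smult_right)
    then show ?thesis using orth_P[OF s, of k 0] less wpoly_smult by simp
  next
    case (Suc d)
    define c where "c = coeff q (Suc d)"
    have "degree (q - smult c (P s (Suc d))) \<le> d"
      using Suc deg_P[OF s] lead_P[OF s, of "Suc d"] unfolding c_def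
      by (intro degree_diff_same_top) auto
    then have "W s (P s k * (q - smult c (P s (Suc d)))) = 0"
      using Suc less by (intro less.hyps) auto
    moreover have "W s (P s k * smult c (P s (Suc d))) = 0"
      using orth_P[OF s, of k "Suc d"] Suc less wpoly_smult by (simp add: mult_smult_right)
    moreover have "P s k * q = P s k * (q - smult c (P s (Suc d))) + P s k * smult c (P s (Suc d))"
      by (simp add: algebra_simps)
    ultimately show ?thesis by (simp add: W_add)
  qed
qed

lemma W_P_times:
  assumes s: "s \<in> {0<..<1}" and q: "degree q \<le> k"
  shows "W s (P s k * q) = coeff q k * hnorm s k"
proof -
  define c where "c = coeff q k"
  have "degree (q - smult c (P s k)) < k \<or> q - smult c (P s k) = 0"
  proof (cases k)
    case 0
    then show ?thesis using q P_zero[OF s] constant_poly_eq[of q] by (auto simp: c_def)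
  next
    case (Suc d)
    then have "degree (q - smult c (P s k)) \<le> d"
      using q deg_P[OF s, of k] lead_P[OF s, of k] unfolding c_def
      by (intro degree_diff_same_top) auto
    then show ?thesis using Suc by auto
  qed
  then have "W s (P s k * (q - smult c (P s k))) = 0"
    using wpoly_smult[of al be A B s 0 0] by (auto simp: orth_lower_degree[OF s])
  moreover have "P s k * q = P s k * (q - smult c (P s k)) + smult c (P s k * P s k)"
    by (simp add: algebra_simps)
  ultimately show ?thesis by (simp add: W_add wpoly_smult hnorm_def c_def)
qed

lemma zero_if_orth:
  assumes s: "s \<in> {0<..<1}"
  shows "degree q \<le> k \<Longrightarrow> (\<And>j. j \<le> k \<Longrightarrow> W s (P s j * q) = 0) \<Longrightarrow> q = 0"
proof (induction k arbitrary: q)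
  case 0
  then have "coeff q 0 = 0" using W_P_times[OF s, of q 0] hnorm_pos[OF s, of 0] by simp
  then show ?case using 0 constant_poly_eq[of q] by auto
next
  case (Suc k)
  then have "coeff q (Suc k) = 0"
    using W_P_times[OF s, of q "Suc k"] hnorm_pos[OF s, of "Suc k"] by simp
  then have "degree q \<le> k"
    using Suc(2) by (intro degree_le allI impI) (metis coeff_eq_0 Suc_lessI le_less_trans)
  then show ?case using Suc by auto
qed

lemma three_term_recurrence:
  assumes s: "s \<in> {0<..<1}"
  shows "pCons 0 (P s k) = P s (Suc k) + smult (arec s k) (P s k) + smult (brec s k) (P s (k - 1))"
proof -
  define d where "d = pCons 0 (P s k) - P s (Suc k) - smult (arec s k) (P s k)
                      - smult (brec s k) (P s (k - 1))"
  have "degree (pCons 0 (P s k) - P s (Suc k)) \<le> k"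
    using deg_P[OF s] lead_P[OF s] by (intro degree_diff_same_top) (auto simp: degree_pCons_eq_if)
  moreover have "degree (smult c (P s j)) \<le> k" if "j \<le> k" for c j
    using deg_P[OF s, of j] degree_smult_le[of c "P s j"] that by linarith
  ultimately have deg_d: "degree d \<le> k"
    unfolding d_def by (meson degree_diff_le diff_le_self order_refl)
  have "d = 0"
  proof (rule zero_if_orth[OF s deg_d])
    fix j assume j: "j \<le> k"
    have "W s (P s j * pCons 0 (P s k)) = W s (P s k * pCons 0 (P s j))"
      by (simp add: mult.commute)
    also have "\<dots> = (if j = k then arec s k * hnorm s k else if Suc j = k then hnorm s k else 0)"
    proof (cases "j = k")
      case True
      then show ?thesis using hnorm_nz[OF s, of k] by (simp add: arec_def)
    next
      case False
      then have "coeff (pCons 0 (P s j)) k = (if Suc j = k then 1 else 0)"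
        using j lead_P[OF s, of j] coeff_P_above[OF s, of j "k - 1"] by (cases k) auto
      then show ?thesis
        using False j deg_P[OF s, of j] W_P_times[OF s, of "pCons 0 (P s j)" k]
        by (simp add: degree_pCons_eq_if)
    qed
    finally have e1: "W s (P s j * pCons 0 (P s k))
        = (if j = k then arec s k * hnorm s k else if Suc j = k then hnorm s k else 0)" .
    have e2: "brec s k * W s (P s j * P s (k - 1)) = (if Suc j = k then hnorm s k else 0)"
      using orth_P[OF s, of j "k - 1"] hnorm_nz[OF s, of "k - 1"]
      by (auto simp: brec_def hnorm_def)
    show "W s (P s j * d) = 0"
      unfolding d_def using e1 e2 orth_P[OF s, of j "Suc k"] orth_P[OF s, of j k] j
      by (simp add: right_diff_distrib W_diff wpoly_smult hnorm_def)
  qed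
  then show ?thesis unfolding d_def by (simp add: algebra_simps)
qed

end

section \<open>The ladder identities\<close>

context jacobi_jump_family
begin

definition dens :: "real \<Rightarrow> real" where
  "dens s = s powr al * (1 - s) powr be"

definition p1c :: "real \<Rightarrow> nat \<Rightarrow> real" where
  "p1c s k = (if k = 0 then 0 else coeff (P s k) (k - 1))"

definition p2c :: "real \<Rightarrow> nat \<Rightarrow> real" where
  "p2c s k = (if k < 2 then 0 else coeff (P s k) (k - 2))"

definition RR :: "real \<Rightarrow> nat \<Rightarrow> real" where
  "RR s k = B * dens s * (poly (P s k) s)\<^sup>2 / hnorm s k"

definition rr :: "real \<Rightarrow> nat \<Rightarrow> real" where
  "rr s k = (if k = 0 then 0
     else B * dens s * poly (P s k) s * poly (P s (k - 1)) s / hnorm s (k - 1))"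

definition xx :: "real \<Rightarrow> nat \<Rightarrow> real" where
  "xx s k = be * V s (P s k * P s k) / hnorm s k"

definition yy :: "real \<Rightarrow> nat \<Rightarrow> real" where
  "yy s k = (if k = 0 then 0 else be * V s (P s k * P s (k - 1)) / hnorm s (k - 1))"

lemma ibp:
  assumes s: "s \<in> {0<..<1}"
  shows "(al + 1 + be) * W s f - be * V s f + W s (pCons 0 (pderiv f))
           = - B * s * dens s * poly f s"
proof -
  have "s powr (al + 1) = s * s powr al" using powr_add[of s al 1] s by simp
  then show ?thesis using weighted_ibp[of al be s A B f] al be s by (simp add: dens_def)
qed

text \<open>\<open>ibp\<close> applied to \<open>f = P_k\<^sup>2\<close>, using \<open>\<langle>P_k, x P_k'\<rangle> = k h_k\<close>.\<close>
lemma ibp_square: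
  assumes s: "s \<in> {0<..<1}"
  shows "be * V s (P s k * P s k)
           = (2 * real k + 1 + al + be) * hnorm s k + B * s * dens s * (poly (P s k) s)\<^sup>2"
proof -
  have d: "pCons 0 (pderiv (P s k * P s k)) = smult 2 (P s k * pCons 0 (pderiv (P s k)))"
    by (intro poly_ext) (simp add: pderiv_mult algebra_simps)
  have "W s (P s k * pCons 0 (pderiv (P s k))) = k * hnorm s k"
    using W_P_times[OF s, of "pCons 0 (pderiv (P s k))" k] degree_x_pderiv[of "P s k"]
      deg_P[OF s, of k] lead_P[OF s, of k] by (simp add: coeff_x_pderiv)
  then have "W s (pCons 0 (pderiv (P s k * P s k))) = 2 * k * hnorm s k"
    unfolding d wpoly_smult by simp
  then show ?thesis using ibp[OF s, of "P s k * P s k"]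
    by (simp add: hnorm_def power2_eq_square algebra_simps)
qed

text \<open>\<open>ibp\<close> applied to \<open>f = P_k P_(k-1)\<close>, using \<open>\<langle>P_(k-1), x P_k'\<rangle> = -p_1(k) h_(k-1)\<close>.\<close>
lemma ibp_adjacent:
  assumes s: "s \<in> {0<..<1}" and k: "k \<ge> 1"
  shows "be * V s (P s k * P s (k - 1))
           = - p1c s k * hnorm s (k - 1) + B * s * dens s * poly (P s k) s * poly (P s (k - 1)) s"
proof -
  define Q where "Q = P s (k - 1)"
  define D where "D = pCons 0 (pderiv (P s k)) - smult (of_nat k) (P s k)"
  have Q_Pk: "W s (Q * P s k) = 0" "W s (P s k * Q) = 0"
    using orth_P[OF s, of "k - 1" k] orth_P[OF s, of k "k - 1"] k by (simp_all add: Q_def)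
  have Pk_xQ': "W s (P s k * pCons 0 (pderiv Q)) = 0"
    using degree_x_pderiv[of Q] deg_P[OF s, of "k - 1"] k
    by (intro orth_lower_degree[OF s]) (simp add: Q_def)
  have "W s (Q * D) = - p1c s k * hnorm s (k - 1)"
    using W_P_times[OF s, of D "k - 1"] euler_shift[of "P s k" k] deg_P[OF s, of k] k
    by (simp add: Q_def D_def p1c_def)
  then have Q_xPk': "W s (Q * pCons 0 (pderiv (P s k))) = - p1c s k * hnorm s (k - 1)"
    unfolding D_def right_diff_distrib W_diff mult_smult_right wpoly_smult Q_Pk by simp
  have d: "pCons 0 (pderiv (P s k * Q))
      = Q * pCons 0 (pderiv (P s k)) + P s k * pCons 0 (pderiv Q)"
    by (intro poly_ext) (simp add: pderiv_mult algebra_simps)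
  have "- be * V s (P s k * Q) - p1c s k * hnorm s (k - 1) = - B * s * dens s * poly (P s k * Q) s"
    using ibp[OF s, of "P s k * Q"] unfolding d W_add Q_xPk' Pk_xQ' Q_Pk by simp
  then show ?thesis by (simp add: Q_def algebra_simps)
qed

text \<open>\<open>ibp\<close> applied to \<open>f = x P_k\<^sup>2\<close>; it brings in \<open>\<alpha>_k h_k = \<langle>P_k, x P_k\<rangle>\<close>.\<close>
lemma ibp_x_square:
  assumes s: "s \<in> {0<..<1}"
  shows "(2 * real k + 2 + al + be) * W s (pCons 0 (P s k * P s k)) - be * V s (P s k * P s k)
           + be * hnorm s k - 2 * p1c s k * hnorm s k
         = - B * s * s * dens s * (poly (P s k) s)\<^sup>2"
proof -
  define D where "D = pCons 0 (pCons 0 (pderiv (P s k))) - smult (of_nat k) (pCons 0 (P s k))"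
  have "coeff D k = - p1c s k"
    unfolding D_def coeff_x_euler_shift by (cases k) (simp_all add: p1c_def)
  then have "W s (P s k * D) = - p1c s k * hnorm s k"
    using W_P_times[OF s, of D k] degree_x_euler_shift[of "P s k" k] deg_P[OF s, of k]
    by (simp add: D_def)
  then have xxPk': "W s (P s k * pCons 0 (pCons 0 (pderiv (P s k))))
      = - p1c s k * hnorm s k + k * W s (pCons 0 (P s k * P s k))"
    unfolding D_def right_diff_distrib W_diff mult_smult_right wpoly_smult by simp
  have d: "pCons 0 (pderiv (pCons 0 (P s k * P s k)))
      = pCons 0 (P s k * P s k) + smult 2 (P s k * pCons 0 (pCons 0 (pderiv (P s k))))"
    by (intro poly_ext) (simp add: pderiv_mult pderiv_pCons algebra_simps)
  have "(al + 1 + be) * W s (pCons 0 (P s k * P s k)) - be * (V s (P s k * P s k) - hnorm s k)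
        + W s (pCons 0 (P s k * P s k))
        + 2 * (- p1c s k * hnorm s k + k * W s (pCons 0 (P s k * P s k)))
      = - B * s * dens s * poly (pCons 0 (P s k * P s k)) s"
    using ibp[OF s, of "pCons 0 (P s k * P s k)"]
    unfolding d W_add wpoly_smult xxPk' V_times_x hnorm_def by simp
  then show ?thesis by (simp add: power2_eq_square algebra_simps)
qed

text \<open>\<open>ibp\<close> applied to \<open>f = x P_k P_(k-1)\<close>; it brings in \<open>p_2(k)\<close>.\<close>
lemma ibp_x_adjacent:
  assumes s: "s \<in> {0<..<1}" and k: "k \<ge> 1"
  shows "(2 * real k + 1 + al + be) * hnorm s k - be * V s (P s k * P s (k - 1))
           + ((p1c s k)\<^sup>2 - 2 * p2c s k) * hnorm s (k - 1)
         = - B * s * s * dens s * poly (P s k) s * poly (P s (k - 1)) s"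
proof -
  define Q where "Q = P s (k - 1)"
  define D where "D = pCons 0 (pCons 0 (pderiv (P s k))) - smult (of_nat k) (pCons 0 (P s k))"
  have deg_Q: "degree Q = k - 1" and lead_Q: "coeff Q (k - 1) = 1"
    using deg_P[OF s] lead_P[OF s] by (simp_all add: Q_def)
  have Q_Pk: "W s (Q * P s k) = 0" "W s (P s k * Q) = 0"
    using orth_P[OF s, of "k - 1" k] orth_P[OF s, of k "k - 1"] k by (simp_all add: Q_def)
  have xPQ: "W s (pCons 0 (P s k * Q)) = hnorm s k"
  proof -
    have "W s (P s k * pCons 0 Q) = coeff (pCons 0 Q) k * hnorm s k"
      using deg_Q k by (intro W_P_times[OF s]) (simp add: degree_pCons_eq_if)
    moreover have "coeff (pCons 0 Q) k = 1" using lead_Q k by (cases k) auto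
    ultimately show ?thesis by simp
  qed
  have Pk_xxQ': "W s (P s k * pCons 0 (pCons 0 (pderiv Q))) = (of_nat k - 1) * hnorm s k"
  proof -
    have "coeff (pCons 0 (pCons 0 (pderiv Q))) k = of_nat k - 1"
      using lead_Q k coeff_x_euler_shift[of Q 0 k] by simp
    moreover have "degree (pCons 0 (pCons 0 (pderiv Q))) \<le> k"
      using deg_Q k by (cases "k \<ge> 2") (auto simp: degree_pCons_eq_if degree_pderiv pderiv_eq_0_iff)
    ultimately show ?thesis using W_P_times[OF s] by metis
  qed
  have D_top: "degree (D + smult (p1c s k) (P s k)) \<le> k - 1"
  proof (rule degree_le, intro allI impI)
    fix i assume "k - 1 < i"
    then have "i = k \<or> i = Suc k \<or> Suc k < i" by auto
    then show "coeff (D + smult (p1c s k) (P s k)) i = 0"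
      using k lead_P[OF s, of k] coeff_P_above[OF s, of k i]
      unfolding coeff_add coeff_smult D_def coeff_x_euler_shift
      by (auto simp: p1c_def coeff_P_above[OF s])
  qed
  have "coeff (D + smult (p1c s k) (P s k)) (k - 1) = (p1c s k)\<^sup>2 - 2 * p2c s k"
    using k unfolding coeff_add coeff_smult D_def coeff_x_euler_shift
    by (cases "k = 1") (auto simp: p1c_def p2c_def power2_eq_square of_nat_diff
        numeral_2_eq_2 algebra_simps)
  then have "W s (Q * D) + p1c s k * W s (Q * P s k) = ((p1c s k)\<^sup>2 - 2 * p2c s k) * hnorm s (k - 1)"
    using W_P_times[OF s D_top] unfolding distrib_left W_add mult_smult_right wpoly_smult Q_def
    by simp
  then have Q_xxPk': "W s (Q * pCons 0 (pCons 0 (pderiv (P s k))))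
      = ((p1c s k)\<^sup>2 - 2 * p2c s k) * hnorm s (k - 1) + k * hnorm s k"
    using xPQ Q_Pk unfolding D_def right_diff_distrib W_diff mult_smult_right wpoly_smult
    by (simp add: mult.commute)
  have d: "pCons 0 (pderiv (pCons 0 (P s k * Q))) = pCons 0 (P s k * Q)
      + P s k * pCons 0 (pCons 0 (pderiv Q)) + Q * pCons 0 (pCons 0 (pderiv (P s k)))"
    by (intro poly_ext) (simp add: pderiv_mult pderiv_pCons algebra_simps)
  have "(al + 1 + be) * hnorm s k - be * V s (P s k * Q) + hnorm s k + (of_nat k - 1) * hnorm s k
        + (((p1c s k)\<^sup>2 - 2 * p2c s k) * hnorm s (k - 1) + k * hnorm s k)
      = - B * s * dens s * poly (pCons 0 (P s k * Q)) s"
    using ibp[OF s, of "pCons 0 (P s k * Q)"] V_times_x[of s "P s k * Q"] Q_Pk(2)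
    unfolding d W_add xPQ Pk_xxQ' Q_xxPk' by simp
  then show ?thesis by (simp add: Q_def algebra_simps)
qed

end

text \<open>The purely algebraic induction step for the \<open>\<beta>\<close>-identity: from the identities at
  index \<open>k\<close> and the recurrences linking indices \<open>k\<close> and \<open>k+1\<close>, the identity at \<open>k+1\<close> follows.\<close>
lemma beta_identity_step:
  fixes k al be s x y r R b a p1 p2 p1' p2' r' y' b' :: real
  assumes x_id: "x = 2*k + 1 + al + be + s * R"
    and p1_id: "p1 = s * r - y"
    and alpha_id: "(2*k + 2 + al + be) * a = 2 * p1 - be + (2*k + 1 + al + be) * s + (1 - s) * x"
    and p2_id: "2 * p2 = (2*k + 1 + al + be) * b + p1 + p1\<^sup>2 - s * (1 - s) * r"
    and beta_id: "(2*k - 1 + al + be) * (2*k + 1 + al + be) * b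
                    = p1\<^sup>2 + (2*k + al) * p1 + (2*k + al + be) * (1 - s) * y + k * (k + al) * s"
    and p1_rec: "p1' = p1 - a"
    and p2_rec: "p2' = p2 - a * p1 - b"
    and r_rec: "r' + r = (s - a) * R"
    and y_rec: "y' + y = (1 - a) * x - be"
    and p2_id': "2 * p2' = (2*k + 3 + al + be) * b' + p1' + p1'\<^sup>2 - s * (1 - s) * r'"
  shows "(2*k + 1 + al + be) * (2*k + 3 + al + be) * b'
           = p1'\<^sup>2 + (2*k + 2 + al) * p1' + (2*k + 2 + al + be) * (1 - s) * y'
             + (k + 1) * (k + 1 + al) * s"
  using assms by algebra

context jacobi_jump_family
begin

text \<open>Dividing the four \<open>ibp\<close> identities by the norms.\<close>
lemma x_identity: "s \<in> {0<..<1} \<Longrightarrow> xx s k = 2 * real k + 1 + al + be + s * RR s k"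
  using ibp_square[of s k] hnorm_nz[of s k] unfolding xx_def RR_def
  by (simp add: field_simps)

lemma p1_identity: "s \<in> {0<..<1} \<Longrightarrow> p1c s k = s * rr s k - yy s k"
  using ibp_adjacent[of s k] hnorm_nz[of s "k - 1"] unfolding yy_def rr_def
  by (cases "k = 0") (simp_all add: p1c_def field_simps)

lemma alpha_identity:
  assumes s: "s \<in> {0<..<1}"
  shows "(2 * real k + 2 + al + be) * arec s k
           = 2 * p1c s k - be + (2 * real k + 1 + al + be) * s + (1 - s) * xx s k"
proof -
  have h: "hnorm s k \<noteq> 0" by (rule hnorm_nz[OF s])
  have a: "(2 * real k + 2 + al + be) * arec s k * hnorm s k - be * V s (P s k * P s k)
      + be * hnorm s k - 2 * p1c s k * hnorm s k = - B * s * s * dens s * (poly (P s k) s)\<^sup>2"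
    using ibp_x_square[OF s, of k] h unfolding arec_def by simp
  have x: "be * V s (P s k * P s k) = xx s k * hnorm s k" unfolding xx_def using h by simp
  have r: "B * dens s * (poly (P s k) s)\<^sup>2 = RR s k * hnorm s k" unfolding RR_def using h by simp
  have "((2 * real k + 2 + al + be) * arec s k - xx s k + be - 2 * p1c s k) * hnorm s k
      = (- s * s * RR s k) * hnorm s k"
    using a x r by algebra
  then have "(2 * real k + 2 + al + be) * arec s k - xx s k + be - 2 * p1c s k = - s * s * RR s k"
    by (rule mult_right_cancel[OF h, THEN iffD1])
  then show ?thesis using x_identity[OF s, of k] by (simp add: algebra_simps)
qed

lemma p2_identity:
  assumes s: "s \<in> {0<..<1}"
  shows "2 * p2c s k = (2 * real k + 1 + al + be) * brec s k + p1c s k + (p1c s k)\<^sup>2 - s * (1 - s) * rr s k"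
proof (cases "k = 0")
  case False
  then have k: "k \<ge> 1" by simp
  have h: "hnorm s (k - 1) \<noteq> 0" by (rule hnorm_nz[OF s])
  have b: "brec s k * hnorm s (k - 1) = hnorm s k" unfolding brec_def using h k by simp
  have r: "rr s k * hnorm s (k - 1) = B * dens s * poly (P s k) s * poly (P s (k - 1)) s"
    unfolding rr_def using h k by simp
  have "2 * p2c s k * hnorm s (k - 1)
      = ((2 * real k + 1 + al + be) * brec s k + p1c s k + (p1c s k)\<^sup>2 - s * (1 - s) * rr s k) * hnorm s (k - 1)"
    using ibp_x_adjacent[OF s k] ibp_adjacent[OF s k] b r by algebra
  then show ?thesis using h by simp
qed (simp add: p1c_def p2c_def brec_def rr_def)

text \<open>Comparing coefficients of \<open>x^k\<close> and \<open>x^(k-1)\<close> in the three-term recurrence.\<close>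
lemma p1_recurrence:
  assumes s: "s \<in> {0<..<1}"
  shows "p1c s (Suc k) = p1c s k - arec s k"
proof -
  have "coeff (pCons 0 (P s k)) k
      = coeff (P s (Suc k) + smult (arec s k) (P s k) + smult (brec s k) (P s (k - 1))) k"
    using three_term_recurrence[OF s, of k] by simp
  moreover have "coeff (pCons 0 (P s k)) k = p1c s k" by (cases k) (auto simp: p1c_def)
  moreover have "brec s k * coeff (P s (k - 1)) k = 0"
    by (cases k) (auto simp: brec_def coeff_P_above[OF s])
  ultimately show ?thesis using lead_P[OF s, of k] by (simp add: p1c_def)
qed

lemma p2_recurrence:
  assumes s: "s \<in> {0<..<1}"
  shows "p2c s (Suc k) = p2c s k - arec s k * p1c s k - brec s k"
proof (cases "k = 0")
  case False
  have "coeff (pCons 0 (P s k)) (k - 1)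
      = coeff (P s (Suc k) + smult (arec s k) (P s k) + smult (brec s k) (P s (k - 1))) (k - 1)"
    using three_term_recurrence[OF s, of k] by simp
  moreover have "coeff (pCons 0 (P s k)) (k - 1) = p2c s k"
  proof -
    obtain m where "k = Suc m" using False by (cases k) auto
    then show ?thesis by (cases m) (auto simp: p2c_def)
  qed
  ultimately show ?thesis using False lead_P[OF s, of "k - 1"] by (simp add: p1c_def p2c_def)
qed (simp add: p1c_def p2c_def brec_def)

text \<open>Evaluating the recurrence at \<open>x = s\<close>, resp. integrating it against \<open>P_k w/(1-x)\<close>.\<close>
lemma r_recurrence:
  assumes s: "s \<in> {0<..<1}"
  shows "rr s (Suc k) + rr s k = (s - arec s k) * RR s k"
proof -
  have e: "s * poly (P s k) s
      = poly (P s (Suc k)) s + arec s k * poly (P s k) s + brec s k * poly (P s (k - 1)) s"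
    using arg_cong[OF three_term_recurrence[OF s, of k], of "\<lambda>p. poly p s"] by simp
  have "brec s k * poly (P s (k - 1)) s * (B * dens s * poly (P s k) s) / hnorm s k = rr s k"
    using hnorm_nz[OF s] by (cases k) (simp_all add: brec_def rr_def field_simps)
  then show ?thesis
    using e hnorm_nz[OF s, of k] unfolding RR_def rr_def
    by (simp add: power2_eq_square field_simps)
qed

lemma y_recurrence:
  assumes s: "s \<in> {0<..<1}"
  shows "yy s (Suc k) + yy s k = (1 - arec s k) * xx s k - be"
proof -
  have h: "hnorm s k \<noteq> 0" by (rule hnorm_nz[OF s])
  have "V s (P s k * pCons 0 (P s k))
      = V s (P s k * (P s (Suc k) + smult (arec s k) (P s k) + smult (brec s k) (P s (k - 1))))"
    using three_term_recurrence[OF s, of k] by simp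
  then have e: "V s (P s k * P s k) - hnorm s k = V s (P s (Suc k) * P s k)
      + arec s k * V s (P s k * P s k) + brec s k * V s (P s k * P s (k - 1))"
    using V_times_x[of s "P s k * P s k"]
    by (simp add: distrib_left V_add wpoly_red_smult hnorm_def mult.commute)
  have t: "be * (brec s k * V s (P s k * P s (k - 1))) / hnorm s k = yy s k"
    using hnorm_nz[OF s] h by (cases k) (simp_all add: brec_def yy_def field_simps)
  have "(1 - arec s k) * xx s k - be
      = be * (V s (P s k * P s k) - hnorm s k - arec s k * V s (P s k * P s k)) / hnorm s k"
    unfolding xx_def using h by (simp add: field_simps)
  also have "\<dots> = be * V s (P s (Suc k) * P s k) / hnorm s k
      + be * (brec s k * V s (P s k * P s (k - 1))) / hnorm s k"
    unfolding e by (simp add: field_simps add_divide_distrib)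
  also have "\<dots> = yy s (Suc k) + yy s k" unfolding t by (simp add: yy_def)
  finally show ?thesis by simp
qed

lemma beta_identity:
  assumes s: "s \<in> {0<..<1}"
  shows "(2 * real k - 1 + al + be) * (2 * real k + 1 + al + be) * brec s k
           = (p1c s k)\<^sup>2 + (2 * real k + al) * p1c s k + (2 * real k + al + be) * (1 - s) * yy s k
             + real k * (real k + al) * s"
proof (induction k)
  case 0
  then show ?case by (simp add: brec_def p1c_def yy_def)
next
  case (Suc k)
  have "2 * p2c s (Suc k) = (2 * real k + 3 + al + be) * brec s (Suc k) + p1c s (Suc k)
      + (p1c s (Suc k))\<^sup>2 - s * (1 - s) * rr s (Suc k)"
    using p2_identity[OF s, of "Suc k"] by (simp add: algebra_simps)
  from beta_identity_step[OF x_identity[OF s] p1_identity[OF s] alpha_identity[OF s]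
      p2_identity[OF s] Suc p1_recurrence[OF s] p2_recurrence[OF s] r_recurrence[OF s]
      y_recurrence[OF s] this]
  show ?case by (simp add: algebra_simps)
qed

end

section \<open>Dependence on the jump position\<close>

lemma poly_as_sum: "degree (p :: real poly) \<le> N \<Longrightarrow> poly p x = (\<Sum>j\<le>N. coeff p j * x ^ j)"
proof -
  assume d: "degree p \<le> N"
  have "poly p x = (\<Sum>j\<le>degree p. coeff p j * x ^ j)" by (simp add: poly_altdef)
  also have "\<dots> = (\<Sum>j\<le>N. coeff p j * x ^ j)"
    using d by (intro sum.mono_neutral_left) (auto simp: coeff_eq_0)
  finally show ?thesis .
qed

definition coeff_cont_at :: "real \<Rightarrow> (real \<Rightarrow> real poly) \<Rightarrow> bool" where
  "coeff_cont_at t q \<longleftrightarrow> (\<forall>j. ((\<lambda>s. coeff (q s) j) \<longlongrightarrow> coeff (q t) j) (at t))"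

lemma coeff_cont_at_const: "coeff_cont_at t (\<lambda>s. p)"
  unfolding coeff_cont_at_def by simp

lemma coeff_cont_at_diff: "coeff_cont_at t q \<Longrightarrow> coeff_cont_at t r \<Longrightarrow> coeff_cont_at t (\<lambda>s. q s - r s)"
  unfolding coeff_cont_at_def by (auto intro: tendsto_intros)

lemma coeff_cont_at_smult:
  "((\<lambda>s. c s) \<longlongrightarrow> c t) (at t) \<Longrightarrow> coeff_cont_at t q \<Longrightarrow> coeff_cont_at t (\<lambda>s. smult (c s) (q s))"
  unfolding coeff_cont_at_def by (auto intro: tendsto_intros)

lemma coeff_cont_at_times_x: "coeff_cont_at t q \<Longrightarrow> coeff_cont_at t (\<lambda>s. pCons 0 (q s))"
  unfolding coeff_cont_at_def
proof (intro allI)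
  fix j assume "\<forall>j. ((\<lambda>s. coeff (q s) j) \<longlongrightarrow> coeff (q t) j) (at t)"
  then show "((\<lambda>s. coeff (pCons 0 (q s)) j) \<longlongrightarrow> coeff (pCons 0 (q t)) j) (at t)"
    by (cases j) auto
qed

lemma coeff_cont_at_mult: "coeff_cont_at t q \<Longrightarrow> coeff_cont_at t r \<Longrightarrow> coeff_cont_at t (\<lambda>s. q s * r s)"
  unfolding coeff_cont_at_def coeff_mult by (auto intro!: tendsto_intros)

lemma coeff_cont_at_cong:
  assumes "coeff_cont_at t q" "eventually (\<lambda>s. q s = r s) (at t)" "q t = r t"
  shows "coeff_cont_at t r"
  unfolding coeff_cont_at_def
proof
  fix j
  have "eventually (\<lambda>s. coeff (q s) j = coeff (r s) j) (at t)"
    using assms(2) by eventually_elim simp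
  moreover have "((\<lambda>s. coeff (q s) j) \<longlongrightarrow> coeff (q t) j) (at t)"
    using assms(1) unfolding coeff_cont_at_def by blast
  ultimately show "((\<lambda>s. coeff (r s) j) \<longlongrightarrow> coeff (r t) j) (at t)"
    using assms(3) Lim_transform_eventually by fastforce
qed

lemma eventually_in_unit_interval: "(t :: real) \<in> {0<..<1} \<Longrightarrow> eventually (\<lambda>s. s \<in> {0<..<1}) (at t)"
  by (rule eventually_at_in_open') (simp_all add: open_greaterThanLessThan)

context jacobi_jump_family
begin

text \<open>The Jacobi moments \<open>\<mu>_j(s) = \<integral>_s^1 x^j x^al (1-x)^be dx\<close>.  Every \<open>W s p\<close> is a
  finite combination of them, which makes the dependence on \<open>s\<close> explicit.\<close>
definition mu :: "nat \<Rightarrow> real \<Rightarrow> real" where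
  "mu j s = integral {s..1} (\<lambda>x. x ^ j * dens x)"

lemma continuous_on_poly_dens: "continuous_on {0..1} g \<Longrightarrow> continuous_on {0..1} (\<lambda>x. g x * dens x)"
  unfolding dens_def using al be by (intro continuous_intros continuous_on_powr') auto

lemma integral_poly_dens:
  assumes u: "u \<in> {0..1}" and d: "degree p \<le> N"
  shows "integral {u..1} (\<lambda>x. poly p x * dens x) = (\<Sum>j\<le>N. coeff p j * mu j u)"
proof -
  have int: "(\<lambda>x. x ^ j * dens x) integrable_on {u..1}" for j
    using u by (intro integrable_continuous_interval continuous_on_subset[OF continuous_on_poly_dens])
      (auto intro: continuous_intros)
  have "integral {u..1} (\<lambda>x. poly p x * dens x)
      = integral {u..1} (\<lambda>x. \<Sum>j\<le>N. coeff p j * (x ^ j * dens x))"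
    using d by (intro integral_cong) (simp add: poly_as_sum sum_distrib_right mult.assoc)
  also have "\<dots> = (\<Sum>j\<le>N. integral {u..1} (\<lambda>x. coeff p j * (x ^ j * dens x)))"
    using integrable_on_cmult_left[OF int, where c="coeff p _"] by (intro integral_sum) auto
  also have "\<dots> = (\<Sum>j\<le>N. coeff p j * mu j u)"
    by (simp add: mu_def)
  finally show ?thesis .
qed

lemma W_moment_expansion:
  assumes s: "s \<in> {0<..<1}" and d: "degree p \<le> N"
  shows "W s p = (\<Sum>j\<le>N. coeff p j * (A * mu j 0 + B * mu j s))"
proof -
  define f where "f x = poly p x * dens x" for x
  have cont: "continuous_on {0..1} f" unfolding f_def by (intro continuous_on_poly_dens continuous_intros)
  have int_f: "f integrable_on {0..1}" using cont by (rule integrable_continuous_interval)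
  have "f integrable_on {s..1}"
    using s by (intro integrable_continuous_interval continuous_on_subset[OF cont]) auto
  moreover have cut: "{s..} \<inter> {0..1} = {s..1}" using s by auto
  ultimately have int_cut: "(\<lambda>x. if x \<in> {s..} then f x else 0) integrable_on {0..1}"
    by (simp only: integrable_restrict_Int)
  have "W s p = integral {0..1} (\<lambda>x. poly p x * jw al be A B s x)"
    unfolding wpoly_def wint_def using al be
    by (intro set_borel_integral_eq_integral(2) poly_jw_integrable) auto
  also have "\<dots> = integral {0..1} (\<lambda>x. A * f x + B * (if x \<in> {s..} then f x else 0))"
    by (intro integral_cong) (auto simp: f_def jw_def dens_def heaviside_def algebra_simps)
  also have "\<dots> = A * integral {0..1} f + B * integral {0..1} (\<lambda>x. if x \<in> {s..} then f x else 0)"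
    using integral_add[OF integrable_on_cmult_left[OF int_f, of A]
        integrable_on_cmult_left[OF int_cut, of B]] by simp
  also have "integral {0..1} (\<lambda>x. if x \<in> {s..} then f x else 0) = integral {s..1} f"
    unfolding integral_restrict_Int using s by (intro arg_cong2[where f=integral]) auto
  also have "integral {0..1} f = (\<Sum>j\<le>N. coeff p j * mu j 0)"
    unfolding f_def using d by (intro integral_poly_dens) auto
  also have "integral {s..1} f = (\<Sum>j\<le>N. coeff p j * mu j s)"
    unfolding f_def using d s by (intro integral_poly_dens) auto
  finally show ?thesis by (simp add: sum_distrib_left sum.distrib algebra_simps)
qed

lemma mu_deriv:
  assumes t: "t \<in> {0<..<1}"
  shows "(mu j has_real_derivative - (t ^ j * dens t)) (at t)"
proof -
  have "((\<lambda>x. integral {x..1} (\<lambda>x. x ^ j * dens x)) has_real_derivative - (t ^ j * dens t))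
          (at t within {0..1})"
    using t by (intro integral_has_real_derivative' continuous_on_poly_dens continuous_intros) auto
  moreover have "at t within {0..1} = at t"
    using t by (intro at_within_interior) auto
  ultimately show ?thesis unfolding mu_def[abs_def] by simp
qed

lemma W_tendsto:
  assumes t: "t \<in> {0<..<1}" and q: "coeff_cont_at t q"
    and deg: "\<And>s. s \<in> {0<..<1} \<Longrightarrow> degree (q s) \<le> N"
  shows "((\<lambda>s. W s (q s)) \<longlongrightarrow> W t (q t)) (at t)"
proof -
  have "((\<lambda>s. \<Sum>j\<le>N. coeff (q s) j * (A * mu j 0 + B * mu j s))
          \<longlongrightarrow> (\<Sum>j\<le>N. coeff (q t) j * (A * mu j 0 + B * mu j t))) (at t)"
    using q DERIV_isCont[OF mu_deriv[OF t]] unfolding coeff_cont_at_def isCont_def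
    by (auto intro!: tendsto_intros)
  moreover have "eventually (\<lambda>s. (\<Sum>j\<le>N. coeff (q s) j * (A * mu j 0 + B * mu j s)) = W s (q s)) (at t)"
    using eventually_in_unit_interval[OF t] by eventually_elim (intro W_moment_expansion[symmetric] deg)
  ultimately show ?thesis
    using W_moment_expansion[OF t deg[OF t]] Lim_transform_eventually by fastforce
qed

lemma hnorm_tendsto:
  assumes t: "t \<in> {0<..<1}" and c: "coeff_cont_at t (\<lambda>s. P s k)"
  shows "((\<lambda>s. hnorm s k) \<longlongrightarrow> hnorm t k) (at t)"
  unfolding hnorm_def
proof (rule W_tendsto[OF t coeff_cont_at_mult[OF c c]])
  fix s :: real assume "s \<in> {0<..<1}"
  then show "degree (P s k * P s k) \<le> 2 * k"
    using deg_P degree_mult_le[of "P s k" "P s k"] by simp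
qed

lemma arec_tendsto:
  assumes t: "t \<in> {0<..<1}" and c: "coeff_cont_at t (\<lambda>s. P s k)"
  shows "((\<lambda>s. arec s k) \<longlongrightarrow> arec t k) (at t)"
proof -
  have "degree (P s k * pCons 0 (P s k)) \<le> 2 * k + 1" if "s \<in> {0<..<1}" for s
    using deg_P[OF that, of k] degree_mult_le[of "P s k" "pCons 0 (P s k)"]
    by (simp add: degree_pCons_eq_if split: if_splits)
  then have "((\<lambda>s. W s (P s k * pCons 0 (P s k))) \<longlongrightarrow> W t (P t k * pCons 0 (P t k))) (at t)"
    using c by (intro W_tendsto[OF t] coeff_cont_at_mult coeff_cont_at_times_x)
  then show ?thesis
    unfolding arec_def using hnorm_tendsto[OF t c] hnorm_nz[OF t, of k] by (intro tendsto_divide)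
qed

lemma P_Suc_eq:
  "s \<in> {0<..<1} \<Longrightarrow>
     P s (Suc k) = pCons 0 (P s k) - smult (arec s k) (P s k) - smult (brec s k) (P s (k - 1))"
  using three_term_recurrence[of s k] by (simp add: algebra_simps)

lemma brec_tendsto:
  assumes t: "t \<in> {0<..<1}"
    and c: "coeff_cont_at t (\<lambda>s. P s k)" "coeff_cont_at t (\<lambda>s. P s (Suc k))"
  shows "((\<lambda>s. brec s (Suc k)) \<longlongrightarrow> brec t (Suc k)) (at t)"
  unfolding brec_def
  using tendsto_divide[OF hnorm_tendsto[OF t c(2)] hnorm_tendsto[OF t c(1)] hnorm_nz[OF t, of k]]
  by simp

lemma P_coeff_cont:
  assumes t: "t \<in> {0<..<1}"
  shows "coeff_cont_at t (\<lambda>s. P s k)"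
proof -
  have step: "coeff_cont_at t (\<lambda>s. P s (Suc k))"
    if c: "coeff_cont_at t (\<lambda>s. P s k)" "coeff_cont_at t (\<lambda>s. P s (k - 1))"
      and b: "((\<lambda>s. brec s k) \<longlongrightarrow> brec t k) (at t)" for k
  proof (rule coeff_cont_at_cong)
    show "coeff_cont_at t
            (\<lambda>s. pCons 0 (P s k) - smult (arec s k) (P s k) - smult (brec s k) (P s (k - 1)))"
      by (intro coeff_cont_at_diff coeff_cont_at_times_x coeff_cont_at_smult c b
          arec_tendsto[OF t])
    show "\<forall>\<^sub>F s in at t. pCons 0 (P s k) - smult (arec s k) (P s k)
            - smult (brec s k) (P s (k - 1)) = P s (Suc k)"
      using eventually_in_unit_interval[OF t] by eventually_elim (simp add: P_Suc_eq)
  qed (simp add: P_Suc_eq[OF t])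
  have c0: "coeff_cont_at t (\<lambda>s. P s 0)"
  proof (rule coeff_cont_at_cong[OF coeff_cont_at_const[of t 1]])
    show "\<forall>\<^sub>F s in at t. 1 = P s 0"
      using eventually_in_unit_interval[OF t] by eventually_elim (simp add: P_zero)
  qed (simp add: P_zero[OF t])
  have "coeff_cont_at t (\<lambda>s. P s k) \<and> coeff_cont_at t (\<lambda>s. P s (Suc k))"
  proof (induction k)
    case 0
    have "coeff_cont_at t (\<lambda>s. P s 1)"
      using step[of 0] c0 by (simp add: brec_def)
    then show ?case using c0 by simp
  next
    case (Suc k)
    then show ?case using step[of "Suc k"] brec_tendsto[OF t] by simp
  qed
  then show ?thesis ..
qed

end

context jacobi_jump_family
begin

text \<open>Comparing \<open>\<langle>P_(n-1)(s), P_n(s) - P_n(t)\<rangle>\<close> for the weights with jumps at \<open>s\<close> and \<open>t\<close>: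
  the two weights differ by \<open>B\<close> times the density on the interval between \<open>s\<close> and \<open>t\<close>, so
  the change of the sub-leading coefficient is a combination of moment differences.\<close>
lemma p1_difference:
  assumes t: "t \<in> {0<..<1}" and s: "s \<in> {0<..<1}" and n: "n \<ge> 1"
  shows "(coeff (P s n) (n - 1) - coeff (P t n) (n - 1)) * hnorm s (n - 1)
       = - B * (\<Sum>j\<le>2*n. coeff (P s (n - 1) * P t n) j * (mu j s - mu j t))"
proof -
  define q where "q = P s (n - 1) * P t n"
  have deg_q: "degree q \<le> 2 * n"
    unfolding q_def using degree_mult_le[of "P s (n - 1)" "P t n"] deg_P[OF s, of "n - 1"]
      deg_P[OF t, of n] by simp
  have "degree (P s n - P t n) \<le> n - 1"
    using deg_P[OF s, of n] deg_P[OF t, of n] lead_P[OF s, of n] lead_P[OF t, of n] n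
    by (intro degree_diff_same_top) auto
  then have "W s (P s (n - 1) * (P s n - P t n))
      = (coeff (P s n) (n - 1) - coeff (P t n) (n - 1)) * hnorm s (n - 1)"
    using W_P_times[OF s] by simp
  moreover have "W s (P s (n - 1) * P s n) = 0" using orth_P[OF s, of "n - 1" n] n by simp
  ultimately have "W s q = - ((coeff (P s n) (n - 1) - coeff (P t n) (n - 1)) * hnorm s (n - 1))"
    unfolding q_def by (simp add: right_diff_distrib W_diff)
  moreover have "W t q = 0"
    using orth_lower_degree[OF t, of "P s (n - 1)" n] deg_P[OF s, of "n - 1"] n
    by (simp add: q_def mult.commute)
  moreover have "W s q - W t q = B * (\<Sum>j\<le>2*n. coeff q j * (mu j s - mu j t))"
    using W_moment_expansion[OF s deg_q] W_moment_expansion[OF t deg_q]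
    by (simp add: sum_subtractf[symmetric] sum_distrib_left algebra_simps)
  ultimately show ?thesis unfolding q_def by simp
qed

lemma p1_difference_quotient:
  assumes t: "t \<in> {0<..<1}" and s: "s \<in> {0<..<1}" and st: "s \<noteq> t" and n: "n \<ge> 1"
  shows "(coeff (P s n) (n - 1) - coeff (P t n) (n - 1)) / (s - t)
       = - B * (\<Sum>j\<le>2*n. coeff (P s (n - 1) * P t n) j * ((mu j s - mu j t) / (s - t)))
           / hnorm s (n - 1)"
proof -
  define S where "S = (\<Sum>j\<le>2*n. coeff (P s (n - 1) * P t n) j * (mu j s - mu j t))"
  have h: "hnorm s (n - 1) \<noteq> 0" by (rule hnorm_nz[OF s])
  have "coeff (P s n) (n - 1) - coeff (P t n) (n - 1) = - B * S / hnorm s (n - 1)"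
    using p1_difference[OF t s n] h unfolding S_def by (simp add: field_simps)
  moreover have "(\<Sum>j\<le>2*n. coeff (P s (n - 1) * P t n) j * ((mu j s - mu j t) / (s - t)))
      = S / (s - t)"
    unfolding S_def by (simp add: sum_divide_distrib)
  ultimately show ?thesis using h st by (simp add: field_simps)
qed

text \<open>Letting \<open>s \<rightarrow> t\<close> in the difference quotient: \<open>\<mu>_j' = -t^j \<cdot> dens\<close>, so
  \<open>d/dt p_1(n, t) = B \<cdot> dens t \<cdot> P_n(t) P_(n-1)(t) / h_(n-1) = r_n(t)\<close>.\<close>
lemma p1_deriv:
  assumes t: "t \<in> {0<..<1}" and n: "n \<ge> 1"
  shows "((\<lambda>s. coeff (P s n) (n - 1)) has_real_derivative rr t n) (at t)"
proof -
  define q where "q s = P s (n - 1) * P t n" for s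
  have "((\<lambda>s. - B * (\<Sum>j\<le>2*n. coeff (q s) j * ((mu j s - mu j t) / (s - t))) / hnorm s (n - 1))
          \<longlongrightarrow> - B * (\<Sum>j\<le>2*n. coeff (q t) j * (- (t ^ j * dens t))) / hnorm t (n - 1)) (at t)"
  proof (intro tendsto_intros)
    show "hnorm t (n - 1) \<noteq> 0" by (rule hnorm_nz[OF t])
    show "((\<lambda>s. hnorm s (n - 1)) \<longlongrightarrow> hnorm t (n - 1)) (at t)"
      by (rule hnorm_tendsto[OF t P_coeff_cont[OF t]])
    fix j
    show "((\<lambda>s. coeff (q s) j) \<longlongrightarrow> coeff (q t) j) (at t)"
      using coeff_cont_at_mult[OF P_coeff_cont[OF t] coeff_cont_at_const]
      unfolding q_def coeff_cont_at_def by blast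
    show "((\<lambda>s. (mu j s - mu j t) / (s - t)) \<longlongrightarrow> - (t ^ j * dens t)) (at t)"
      using mu_deriv[OF t, of j] unfolding has_field_derivative_iff by simp
  qed
  moreover have "- B * (\<Sum>j\<le>2*n. coeff (q t) j * (- (t ^ j * dens t))) / hnorm t (n - 1) = rr t n"
  proof -
    have "degree (q t) \<le> 2 * n"
      unfolding q_def using degree_mult_le[of "P t (n - 1)" "P t n"] deg_P[OF t, of "n - 1"]
        deg_P[OF t, of n] by simp
    then have "(\<Sum>j\<le>2*n. coeff (q t) j * (- (t ^ j * dens t))) = - (dens t * poly (q t) t)"
      using poly_as_sum[of "q t" "2 * n" t] by (simp add: sum_distrib_left sum_negf algebra_simps)
    then show ?thesis using n unfolding rr_def q_def by (simp add: algebra_simps)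
  qed
  moreover have "eventually (\<lambda>s. - B * (\<Sum>j\<le>2*n. coeff (q s) j * ((mu j s - mu j t) / (s - t)))
      / hnorm s (n - 1) = (coeff (P s n) (n - 1) - coeff (P t n) (n - 1)) / (s - t)) (at t)"
    using eventually_in_unit_interval[OF t] eventually_neq_at_within[of t t UNIV]
    by eventually_elim (unfold q_def, rule p1_difference_quotient[OF t _ _ n, symmetric]; simp)
  ultimately show ?thesis
    unfolding has_field_derivative_iff by (auto intro: Lim_transform_eventually)
qed

end

lemma wint_over_one_minus:
  "wint al be A B s (\<lambda>y. poly p y / (1 - y)) = wpoly_red al be A B s p"
proof -
  have "poly p y / (1 - y) * jw al be A B s y = poly p y * jw_red al be A B s y"
    if "y \<in> {0..1}" for y
    using that by (cases "y = 1") (auto simp: jw_red_def jw_eq_jw_red)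
  then show ?thesis
    unfolding wint_def wpoly_red_def by (intro set_lebesgue_integral_cong) auto
qed

context jacobi_jump_family
begin

lemma h_n_eq: "h_n al be A B t P k = hnorm t k"
  unfolding h_n_def hnorm_def wpoly_def by (simp add: power2_eq_square poly_mult[abs_def])

lemma r_n_eq: "r_n al be A B t P k = rr t k"
  unfolding r_n_def rr_def dens_def h_n_eq by (simp add: mult.assoc)

lemma x_n_eq: "x_n al be A B t P k = xx t k"
  using wint_over_one_minus[of al be A B t "P t k * P t k"]
  unfolding x_n_def xx_def h_n_eq by (simp add: power2_eq_square)

lemma y_n_eq: "y_n al be A B t P k = yy t k"
  using wint_over_one_minus[of al be A B t "P t k * P t (k - 1)"]
  unfolding y_n_def yy_def h_n_eq by simp

lemma p1_eq: "k \<ge> 1 \<Longrightarrow> p1 P k t = p1c t k"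
  unfolding p1_def p1c_def by simp

text \<open>Recurrence coefficients are unique, since \<open>P_n\<close> and \<open>P_(n-1)\<close> have different degrees.\<close>
lemma recurrence_coeffs_unique:
  assumes t: "t \<in> {0<..<1}" and n: "n \<ge> 1"
    and rec: "[:0, 1:] * P t n = P t (Suc n) + smult a (P t n) + smult b (P t (n - 1))"
  shows "a = arec t n" and "b = brec t n"
proof -
  have eq: "P t (Suc n) + smult a (P t n) + smult b (P t (n - 1))
      = P t (Suc n) + smult (arec t n) (P t n) + smult (brec t n) (P t (n - 1))"
    using rec three_term_recurrence[OF t, of n] by simp
  show a: "a = arec t n"
    using arg_cong[OF eq, of "\<lambda>p. coeff p n"] coeff_P_above[OF t, of "n - 1" n] lead_P[OF t, of n] n
    by simp
  show "b = brec t n"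
    using arg_cong[OF eq, of "\<lambda>p. coeff p (n - 1)"] a lead_P[OF t, of "n - 1"] by simp
qed

end

text \<open>The remaining rewriting of the identities, with \<open>p_1 = t r - y\<close> and \<open>p_1' = r\<close>.\<close>
lemma theorem3p3_algebra:
  fixes n al be t a b p r y x :: real
  assumes alpha: "(2*n + 2 + al + be) * a = 2 * p - be + (2*n + 1 + al + be) * t + (1 - t) * x"
    and p: "p = t * r - y"
    and beta: "(2*n - 1 + al + be) * (2*n + 1 + al + be) * b
                 = p\<^sup>2 + (2*n + al) * p + (2*n + al + be) * (1 - t) * y + n * (n + al) * t"
  shows "(2*n + 2 + al + be) * a = 2 * t * r - 2 * y - be + (2*n + 1 + al + be) * t + (1 - t) * x"
    and "(2*n - 1 + al + be) * (2*n + 1 + al + be) * b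
           = (y - t * r)\<^sup>2 + (2*n + al) * t * r + (be - (2*n + al + be) * t) * y + n * (n + al) * t"
    and "(2*n - 1 + al + be) * (2*n + 1 + al + be) * b
           = p\<^sup>2 + (- be + (2*n + al + be) * t) * p + (2*n + al + be) * t * (1 - t) * r
             + n * (n + al) * t"
  using alpha beta unfolding p by (simp_all add: algebra_simps power2_eq_square)

theorem theorem3p3:
  fixes al be A B t a b :: real and n :: nat and P :: "real \<Rightarrow> nat \<Rightarrow> real poly"
  assumes al: "al > 0" and be: "be > 0"
    and A: "A \<ge> 0" and AB: "A + B \<ge> 0" and nz: "\<not> (A = 0 \<and> B = 0)"
    and OPS: "\<And>s. s \<in> {0<..<1} \<Longrightarrow> monic_OPS al be A B s (P s)"
    and t: "t \<in> {0<..<1}" and n: "n \<ge> 1"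
    and rec: "[:0, 1:] * P t n = P t (Suc n) + smult a (P t n) + smult b (P t (n - 1))"
  shows "(2*n + 2 + al + be) * a
           = 2 * t * r_n al be A B t P n - 2 * y_n al be A B t P n - be
             + (2*n + 1 + al + be) * t + (1 - t) * x_n al be A B t P n
       \<and> (2*n + 2 + al + be) * a
           = 2 * p1 P n t - be + (2*n + 1 + al + be) * t + (1 - t) * x_n al be A B t P n
       \<and> (2*n - 1 + al + be) * (2*n + 1 + al + be) * b
           = (y_n al be A B t P n - t * r_n al be A B t P n)\<^sup>2
             + (2*n + al) * t * r_n al be A B t P n
             + (be - (2*n + al + be) * t) * y_n al be A B t P n + n * (n + al) * t
       \<and> (2*n - 1 + al + be) * (2*n + 1 + al + be) * b
           = (p1 P n t)\<^sup>2 + (2*n + al) * p1 P n t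
             + (2*n + al + be) * (1 - t) * y_n al be A B t P n + n * (n + al) * t
       \<and> (\<lambda>s. p1 P n s) differentiable (at t)
       \<and> (2*n - 1 + al + be) * (2*n + 1 + al + be) * b
           = (p1 P n t)\<^sup>2 + (- be + (2*n + al + be) * t) * p1 P n t
             + (2*n + al + be) * t * (1 - t) * deriv (\<lambda>s. p1 P n s) t + n * (n + al) * t"
proof -
  interpret jacobi_jump_family al be A B P using assms by unfold_locales auto
  have D: "((\<lambda>s. p1 P n s) has_real_derivative rr t n) (at t)"
    using p1_deriv[OF t n] by (simp add: p1_def)
  then have diff: "(\<lambda>s. p1 P n s) differentiable (at t)"
    by (auto intro: differentiableI has_field_derivative_imp_has_derivative)
  have alpha: "(2 * real n + 2 + al + be) * a
      = 2 * p1c t n - be + (2 * real n + 1 + al + be) * t + (1 - t) * xx t n"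
    using alpha_identity[OF t] recurrence_coeffs_unique[OF t n rec] by simp
  have beta: "(2 * real n - 1 + al + be) * (2 * real n + 1 + al + be) * b
      = (p1c t n)\<^sup>2 + (2 * real n + al) * p1c t n + (2 * real n + al + be) * (1 - t) * yy t n
        + real n * (real n + al) * t"
    using beta_identity[OF t] recurrence_coeffs_unique[OF t n rec] by simp
  have "real (2 * n - 1) = 2 * real n - 1" using n by (simp add: of_nat_diff)
  then show ?thesis
    unfolding r_n_eq x_n_eq y_n_eq p1_eq[OF n, of t] DERIV_imp_deriv[OF D]
    using theorem3p3_algebra[OF alpha p1_identity[OF t] beta] alpha beta diff
    by (simp only: of_nat_add of_nat_mult of_nat_numeral of_nat_1)
qed

end
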